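(* Let $\{c_n\}_{n\ge0}$ be a real sequence with $\{c_n\}\in NBVS$, and suppose $f(x)=\sum_{n=0}^\infty c_n\cos nx$ converges for every $x$ and $f\in C_{2\pi}$. Let $S_n(f,x)=\sum_{k=0}^nc_k\cos kx$. If $$\sum_{k=n+1}^{2n}c_k=O\Big(\max_{1\le k\le n}kc_{n+k}\Big)\quad(n\to\infty),$$ then $\|f-S_n(f)\|=O(E_n(f))$.
   Context: For $\theta_0\in[0,\pi/2)$ let $M(\theta_0)=\{z\in\mathbb C: |\arg z|\le\theta_0\}$ (with $0\in M(\theta_0)$). Write $\Delta c_n=c_n-c_{n+1}$. A complex sequence $\mathbf C=\{c_n\}$ belongs to $NBVS$ if there is $\theta_0\in[0,\pi/2)$ with $c_n\in M(\theta_0)$ for all $n\ge1$ and a constant $K(\mathbf C)>0$ such that $\sum_{n=m}^{2m}|\Delta c_n|\le K(\mathbf C)\big(|c_m|+|c_{2m}|\big)$ for all $m\ge1$ (so a real sequence in $NBVS$ is nonnegative for $n\ge1$). $C_{2\pi}$ is the space of continuous $2\pi$-periodic functions with $\|g\|=\max_x|g(x)|$; $E_n(f)$ is the best uniform approximation of $f$ by trigonometric polynomials of degree at most $n$. *)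

theory Defs
  imports "HOL-Analysis.Analysis" "HOL-Library.Landau_Symbols"
begin

definition sector :: "real \<Rightarrow> complex set" where
  "sector \<theta>0 = {z. z = 0 \<or> \<bar>Arg z\<bar> \<le> \<theta>0}"

definition NBVS :: "(nat \<Rightarrow> complex) \<Rightarrow> bool" where
  "NBVS c \<longleftrightarrow>
     (\<exists>\<theta>0. 0 \<le> \<theta>0 \<and> \<theta>0 < pi / 2 \<and> (\<forall>n\<ge>1. c n \<in> sector \<theta>0)) \<and>
     (\<exists>K>0. \<forall>m\<ge>1. (\<Sum>n=m..2*m. norm (c n - c (Suc n))) \<le> K * (norm (c m) + norm (c (2*m))))"

definition sup_norm :: "(real \<Rightarrow> real) \<Rightarrow> real" where
  "sup_norm g = (SUP x. \<bar>g x\<bar>)"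

definition trig_poly :: "nat \<Rightarrow> (real \<Rightarrow> real) \<Rightarrow> bool" where
  "trig_poly n T \<longleftrightarrow> (\<exists>a b :: nat \<Rightarrow> real.
     \<forall>x. T x = a 0 + (\<Sum>k=1..n. a k * cos (real k * x) + b k * sin (real k * x)))"

definition best_approx :: "nat \<Rightarrow> (real \<Rightarrow> real) \<Rightarrow> real" where
  "best_approx n f = (INF T\<in>{T. trig_poly n T}. sup_norm (\<lambda>x. f x - T x))"

end

theory Submission
  imports Defs
begin

(*
  Because c_m >= 0 for m >= 1, the uniform error of S_n f is at most the coefficient tail
  sum_{m>n} c_m, so it suffices to bound this tail by a constant times s whenever |f - T| <= s
  for a trigonometric polynomial T of degree n. Integrating f - T against an even kernel with
  nonnegative cosine moments bounds a weighted sum of coefficients by a multiple of s: a Fejer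
  kernel modulated beyond frequency n bounds every block of consecutive coefficients beyond n by
  4 s, and a de la Vallee Poussin kernel bounds the tail beyond 2 n + 1 by 4 s. The NBVS
  condition makes c quasi-monotone on dyadic blocks, whence k c_{n+k} <= 24 K s, and the
  hypothesis on sum_{k=n+1}^{2n} c_k then controls the remaining block n < m <= 2 n.
*)

lemma abs_mult_cos_le: "\<bar>x * cos y\<bar> \<le> \<bar>x::real\<bar>"
  unfolding abs_mult by (rule mult_left_le) auto

lemma abs_mult_sin_le: "\<bar>x * sin y\<bar> \<le> \<bar>x::real\<bar>"
  unfolding abs_mult by (rule mult_left_le) auto

lemma integral_odd_eq_0:
  fixes g :: "real \<Rightarrow> real"
  assumes "\<And>x. g (-x) = - g x"
  shows "integral {-pi..pi} g = 0"
proof -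
  have "integral {-pi..pi} g = integral {-pi..pi} (\<lambda>x. g (-x))"
    using Henstock_Kurzweil_Integration.integral_reflect_real[of pi "-pi" g] by simp
  also have "\<dots> = - integral {-pi..pi} g"
    using assms by (simp add: integral_neg)
  finally show ?thesis by simp
qed

lemma abs_integral_mult_le:
  fixes h K P :: "real \<Rightarrow> real"
  assumes "continuous_on {-pi..pi} h" "continuous_on {-pi..pi} K" "continuous_on {-pi..pi} P"
    and "\<And>x. \<bar>h x\<bar> \<le> s" and "\<And>x. \<bar>K x\<bar> \<le> P x"
  shows "\<bar>integral {-pi..pi} (\<lambda>x. h x * K x)\<bar> \<le> s * integral {-pi..pi} P"
proof -
  have "norm (integral {-pi..pi} (\<lambda>x. h x * K x)) \<le> integral {-pi..pi} (\<lambda>x. s * P x)"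
  proof (rule integral_norm_bound_integral)
    show "(\<lambda>x. h x * K x) integrable_on {-pi..pi}" "(\<lambda>x. s * P x) integrable_on {-pi..pi}"
      by (intro integrable_continuous_interval continuous_intros assms)+
    show "norm (h x * K x) \<le> s * P x" for x
      using assms(4,5)[of x] by (simp add: abs_mult mult_mono')
  qed
  then show ?thesis by simp
qed

lemma cos_series_integral_sums:
  fixes c :: "nat \<Rightarrow> real" and f K :: "real \<Rightarrow> real"
  assumes summable: "summable (\<lambda>m. \<bar>c m\<bar>)"
    and sums: "\<And>x. (\<lambda>m. c m * cos (real m * x)) sums f x"
    and K: "continuous_on {-pi..pi} K"
  shows "(\<lambda>m. c m * integral {-pi..pi} (\<lambda>x. cos (real m * x) * K x))
           sums integral {-pi..pi} (\<lambda>x. f x * K x)"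
proof -
  have "bounded (K ` {-pi..pi})"
    by (intro compact_imp_bounded compact_continuous_image K compact_Icc)
  then obtain B where B: "\<forall>x\<in>{-pi..pi}. \<bar>K x\<bar> \<le> B"
    by (auto simp: bounded_iff)
  define g where "g = (\<lambda>m x. c m * cos (real m * x) * K x)"
  have "norm (g m x) \<le> \<bar>c m\<bar> * B" if "x \<in> {-pi..pi}" for m x
    using abs_mult_cos_le[of "c m" "real m * x"] B that
    by (simp add: g_def abs_mult mult_mono')
  then have "uniform_limit {-pi..pi} (\<lambda>N x. \<Sum>m<N. g m x) (\<lambda>x. \<Sum>m. g m x) sequentially"
    by (rule Weierstrass_m_test) (auto intro: summable_mult2 summable)
  moreover have "(\<lambda>x. \<Sum>m. g m x) = (\<lambda>x. f x * K x)"
    unfolding g_def by (intro ext sums_unique[symmetric] sums_mult2 sums)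
  ultimately have "uniform_limit {-pi..pi} (\<lambda>N x. \<Sum>m<N. g m x) (\<lambda>x. f x * K x) sequentially"
    by simp
  then obtain I J where I: "\<And>N. ((\<lambda>x. \<Sum>m<N. g m x) has_integral I N) {-pi..pi}"
    and J: "((\<lambda>x. f x * K x) has_integral J) {-pi..pi}" and "I \<longlonglongrightarrow> J"
    by (rule uniform_limit_integral) (auto simp: g_def intro!: continuous_intros K)
  moreover have "I = (\<lambda>N. \<Sum>m<N. c m * integral {-pi..pi} (\<lambda>x. cos (real m * x) * K x))"
  proof
    fix N
    have "((\<lambda>x. \<Sum>m<N. g m x) has_integral
           (\<Sum>m<N. c m * integral {-pi..pi} (\<lambda>x. cos (real m * x) * K x))) {-pi..pi}"
      unfolding g_def mult.assoc
      by (intro has_integral_sum has_integral_mult_right integrable_integral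
          integrable_continuous_interval continuous_intros K) auto
    then show "I N = (\<Sum>m<N. c m * integral {-pi..pi} (\<lambda>x. cos (real m * x) * K x))"
      by (rule has_integral_unique[OF I])
  qed
  ultimately show ?thesis
    unfolding sums_def by (simp add: integral_unique)
qed

lemma continuous_on_trig_poly:
  assumes "trig_poly n T"
  shows "continuous_on S T"
proof -
  obtain a b where "\<And>x. T x = a 0 + (\<Sum>k=1..n. a k * cos (real k * x) + b k * sin (real k * x))"
    using assms unfolding trig_poly_def by blast
  then have "T = (\<lambda>x. a 0 + (\<Sum>k=1..n. a k * cos (real k * x) + b k * sin (real k * x)))"
    by (rule ext)
  then show ?thesis by (simp add: continuous_intros)
qed

lemma trig_poly_bounded:
  assumes "trig_poly n T"
  obtains B where "\<And>x. \<bar>T x\<bar> \<le> B"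
proof -
  obtain a b where T: "\<And>x. T x = a 0 + (\<Sum>k=1..n. a k * cos (real k * x) + b k * sin (real k * x))"
    using assms unfolding trig_poly_def by blast
  have "\<bar>T x\<bar> \<le> \<bar>a 0\<bar> + (\<Sum>k=1..n. \<bar>a k\<bar> + \<bar>b k\<bar>)" for x
  proof -
    have "\<bar>a k * cos (real k * x) + b k * sin (real k * x)\<bar> \<le> \<bar>a k\<bar> + \<bar>b k\<bar>" for k
      using abs_mult_cos_le[of "a k" "real k * x"] abs_mult_sin_le[of "b k" "real k * x"] by linarith
    then have "\<bar>\<Sum>k=1..n. a k * cos (real k * x) + b k * sin (real k * x)\<bar> \<le> (\<Sum>k=1..n. \<bar>a k\<bar> + \<bar>b k\<bar>)"
      by (rule order_trans[OF sum_abs sum_mono])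
    then show ?thesis
      unfolding T by linarith
  qed
  then show thesis by (rule that)
qed

lemma trig_poly_mult_even_has_integral:
  fixes K :: "real \<Rightarrow> real"
  assumes "trig_poly n T" and K: "continuous_on {-pi..pi} K" and even: "\<And>x. K (-x) = K x"
    and moments: "\<And>k. k \<le> n \<Longrightarrow> integral {-pi..pi} (\<lambda>x. cos (real k * x) * K x) = \<mu>"
  shows "((\<lambda>x. T x * K x) has_integral \<mu> * T 0) {-pi..pi}"
proof -
  obtain a b where T: "\<And>x. T x = a 0 + (\<Sum>k=1..n. a k * cos (real k * x) + b k * sin (real k * x))"
    using assms(1) unfolding trig_poly_def by blast
  have cos_integrable: "(\<lambda>x. cos (real k * x) * K x) integrable_on {-pi..pi}"
    and sin_integrable: "(\<lambda>x. sin (real k * x) * K x) integrable_on {-pi..pi}" for k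
    by (intro integrable_continuous_interval continuous_intros K)+
  have cos_moment: "((\<lambda>x. cos (real k * x) * K x) has_integral \<mu>) {-pi..pi}" if "k \<le> n" for k
    using moments[OF that] integrable_integral[OF cos_integrable[of k]] by simp
  have sin_moment: "((\<lambda>x. sin (real k * x) * K x) has_integral 0) {-pi..pi}" for k
  proof -
    have "integral {-pi..pi} (\<lambda>x. sin (real k * x) * K x) = 0"
      by (rule integral_odd_eq_0) (simp add: even)
    then show ?thesis
      using integrable_integral[OF sin_integrable[of k]] by simp
  qed
  have "((\<lambda>x. a 0 * (cos (real 0 * x) * K x) + (\<Sum>k=1..n. a k * (cos (real k * x) * K x)
           + b k * (sin (real k * x) * K x))) has_integral a 0 * \<mu> + (\<Sum>k=1..n. a k * \<mu> + b k * 0))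
         {-pi..pi}"
    by (intro has_integral_add has_integral_mult_right has_integral_sum cos_moment sin_moment) auto
  then show ?thesis
    by (simp add: T algebra_simps sum_distrib_left sum_distrib_right sum.distrib)
qed

subsection \<open>Dirichlet, Fejer and de la Vallee Poussin kernels\<close>

definition dirichlet_kernel :: "nat \<Rightarrow> real \<Rightarrow> real" where
  "dirichlet_kernel j x = 1 + 2 * (\<Sum>d=1..j. cos (real d * x))"

text \<open>\<open>fejer_sum L\<close> is \<open>L\<close> times the Fejer kernel of order \<open>L - 1\<close>.\<close>

definition fejer_sum :: "nat \<Rightarrow> real \<Rightarrow> real" where
  "fejer_sum L x = (\<Sum>j<L. dirichlet_kernel j x)"

definition vallee_poussin :: "nat \<Rightarrow> real \<Rightarrow> real" where
  "vallee_poussin L x = (fejer_sum (2 * L) x - fejer_sum L x) / real L"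

lemma continuous_on_dirichlet_kernel: "continuous_on S (dirichlet_kernel j)"
  unfolding dirichlet_kernel_def by (intro continuous_intros)

lemma continuous_on_fejer_sum: "continuous_on S (fejer_sum L)"
  unfolding fejer_sum_def by (intro continuous_intros continuous_on_dirichlet_kernel)

lemma continuous_on_vallee_poussin: "continuous_on S (vallee_poussin L)"
  unfolding vallee_poussin_def divide_inverse by (intro continuous_intros continuous_on_fejer_sum)

lemma fejer_sum_minus [simp]: "fejer_sum L (-x) = fejer_sum L x"
  by (simp add: fejer_sum_def dirichlet_kernel_def)

lemma vallee_poussin_minus [simp]: "vallee_poussin L (-x) = vallee_poussin L x"
  by (simp add: vallee_poussin_def)

lemma has_integral_cos_mult_dirichlet_kernel:
  fixes k :: int
  shows "((\<lambda>x. cos (of_int k * x) * dirichlet_kernel j x) has_integral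
           (if \<bar>k\<bar> \<le> int j then 2 * pi else 0)) {-pi..pi}"
proof -
  have "(\<lambda>x. cos (of_int k * x) * dirichlet_kernel j x) = (\<lambda>x. cos (of_int k * x) +
     (\<Sum>d\<in>{1..j}. cos (of_int (k - int d) * x) + cos (of_int (k + int d) * x)))"
    by (rule ext, simp add: dirichlet_kernel_def algebra_simps sum_distrib_left cos_times_cos)
      (simp add: sum.distrib[symmetric] add_divide_distrib)
  moreover have "((\<lambda>x. cos (of_int k * x) +
     (\<Sum>d\<in>{1..j}. cos (of_int (k - int d) * x) + cos (of_int (k + int d) * x))) has_integral
     (if k = 0 then 2 * pi else 0) +
     (\<Sum>d\<in>{1..j}. (if k - int d = 0 then 2 * pi else 0) + (if k + int d = 0 then 2 * pi else 0)))
     {-pi..pi}"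
    by (intro has_integral_add has_integral_sum has_integral_cos_nx) auto
  moreover have "(\<Sum>d\<in>{1..j}. (if k - int d = 0 then 2 * pi else 0) + (if k + int d = 0 then 2 * pi else 0))
      = (\<Sum>d\<in>{1..j}. if d = nat \<bar>k\<bar> then (if k = 0 then 0 else 2 * pi) else 0)"
    by (rule sum.cong) auto
  ultimately show ?thesis
    by (auto simp: sum.delta split: if_splits)
qed

lemma has_integral_cos_mult_fejer_sum:
  fixes k :: int
  shows "((\<lambda>x. cos (of_int k * x) * fejer_sum L x) has_integral 2 * pi * real (L - nat \<bar>k\<bar>))
           {-pi..pi}"
proof -
  have "((\<lambda>x. \<Sum>j<L. cos (of_int k * x) * dirichlet_kernel j x) has_integral
         (\<Sum>j<L. if nat \<bar>k\<bar> \<le> j then 2 * pi else 0)) {-pi..pi}"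
    using has_integral_cos_mult_dirichlet_kernel[of k]
    by (intro has_integral_sum) (auto simp: nat_le_iff)
  moreover have "{..<L} \<inter> {j. nat \<bar>k\<bar> \<le> j} = {nat \<bar>k\<bar>..<L}"
    by auto
  then have "(\<Sum>j<L. if nat \<bar>k\<bar> \<le> j then 2 * pi else 0) = 2 * pi * real (L - nat \<bar>k\<bar>)"
    by (simp add: sum.If_cases)
  ultimately show ?thesis
    by (simp add: fejer_sum_def sum_distrib_left)
qed

lemma integral_fejer_sum: "integral {-pi..pi} (fejer_sum L) = 2 * pi * real L"
  using has_integral_cos_mult_fejer_sum[of 0 L] by (simp add: integral_unique)

lemma dirichlet_kernel_telescope:
  "(1 - cos x) * dirichlet_kernel j x = cos (real j * x) - cos (real (Suc j) * x)"
proof (induction j)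
  case 0
  then show ?case by (simp add: dirichlet_kernel_def)
next
  case (Suc j)
  have shift: "cos (real (Suc (Suc j)) * x) = cos (real (Suc j) * x + x)"
    "cos (real j * x) = cos (real (Suc j) * x - x)"
    by (simp_all add: algebra_simps)
  have "(1 - cos x) * dirichlet_kernel (Suc j) x
      = cos (real j * x) - cos (real (Suc j) * x) + (1 - cos x) * 2 * cos (real (Suc j) * x)"
    using Suc by (simp add: dirichlet_kernel_def algebra_simps)
  also have "\<dots> = cos (real (Suc j) * x) - cos (real (Suc (Suc j)) * x)"
    unfolding shift cos_add cos_diff by (simp add: algebra_simps)
  finally show ?case .
qed

lemma fejer_sum_telescope: "(1 - cos x) * fejer_sum L x = 1 - cos (real L * x)"
  unfolding fejer_sum_def sum_distrib_left dirichlet_kernel_telescope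
  using sum_lessThan_telescope'[of "\<lambda>j. cos (real j * x)" L] by simp

lemma fejer_sum_nonneg: "0 \<le> fejer_sum L x"
proof (cases "cos x = 1")
  case True
  then obtain i :: int where "x = of_int i * 2 * pi"
    using cos_one_2pi_int by blast
  then have "cos (real d * x) = 1" for d
    using cos_int_2pin[of "int d * i"] by (simp add: mult_ac)
  then show ?thesis
    by (simp add: fejer_sum_def dirichlet_kernel_def sum_nonneg)
next
  case False
  then have "0 < 1 - cos x"
    using cos_le_one[of x] by linarith
  moreover have "0 \<le> (1 - cos x) * fejer_sum L x"
    by (simp add: fejer_sum_telescope)
  ultimately show ?thesis
    by (simp add: zero_le_mult_iff)
qed

lemma has_integral_cos_mult_modulated_fejer_sum:
  fixes m N :: nat
  shows "((\<lambda>x. cos (real m * x) * (cos (real N * x) * fejer_sum L x)) has_integral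
           pi * (real (L - nat \<bar>int m - int N\<bar>) + real (L - (m + N)))) {-pi..pi}"
proof -
  have "(\<lambda>x. cos (real m * x) * (cos (real N * x) * fejer_sum L x)) =
    (\<lambda>x. (1/2) * (cos (of_int (int m - int N) * x) * fejer_sum L x)
       + (1/2) * (cos (of_int (int m + int N) * x) * fejer_sum L x))"
    using cos_minus[of "real N * _ - real m * _"]
    by (intro ext) (simp add: cos_times_cos algebra_simps add_divide_distrib)
  moreover have "nat \<bar>int m + int N\<bar> = m + N"
    by simp
  ultimately show ?thesis
    using has_integral_add[OF
        has_integral_mult_right[OF has_integral_cos_mult_fejer_sum[of "int m - int N" L], of "1/2"]
        has_integral_mult_right[OF has_integral_cos_mult_fejer_sum[of "int m + int N" L], of "1/2"]]
    by (simp add: algebra_simps)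
qed

lemma has_integral_cos_mult_vallee_poussin:
  "((\<lambda>x. cos (real m * x) * vallee_poussin L x) has_integral
      2 * pi * (real (2 * L - m) - real (L - m)) / real L) {-pi..pi}"
  using has_integral_mult_right[OF has_integral_diff[OF
        has_integral_cos_mult_fejer_sum[of "int m" "2 * L"] has_integral_cos_mult_fejer_sum[of "int m" L]],
      of "1 / real L"]
  by (simp add: vallee_poussin_def algebra_simps diff_divide_distrib)

lemma integral_cos_mult_vallee_poussin_low:
  assumes "m \<le> L" "1 \<le> L"
  shows "integral {-pi..pi} (\<lambda>x. cos (real m * x) * vallee_poussin L x) = 2 * pi"
  using integral_unique[OF has_integral_cos_mult_vallee_poussin[of m L]] assms
  by (simp add: of_nat_diff)

lemma integral_cos_mult_vallee_poussin_high:
  assumes "2 * L \<le> m"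
  shows "integral {-pi..pi} (\<lambda>x. cos (real m * x) * vallee_poussin L x) = 0"
  using integral_unique[OF has_integral_cos_mult_vallee_poussin[of m L]] assms by simp

lemma integral_cos_mult_vallee_poussin_le:
  assumes "1 \<le> L"
  shows "integral {-pi..pi} (\<lambda>x. cos (real m * x) * vallee_poussin L x) \<le> 2 * pi"
proof -
  have "2 * pi * (real (2 * L - m) - real (L - m)) / real L \<le> 2 * pi * real L / real L"
    by (intro divide_right_mono mult_left_mono) auto
  then show ?thesis
    using integral_unique[OF has_integral_cos_mult_vallee_poussin[of m L]] assms by simp
qed

lemma abs_vallee_poussin_le:
  "\<bar>vallee_poussin L x\<bar> \<le> (fejer_sum (2 * L) x + fejer_sum L x) / real L"
  using fejer_sum_nonneg[of "2 * L" x] fejer_sum_nonneg[of L x]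
  by (simp add: vallee_poussin_def divide_right_mono)

lemma integral_vallee_poussin_majorant:
  assumes "1 \<le> L"
  shows "integral {-pi..pi} (\<lambda>x. (fejer_sum (2 * L) x + fejer_sum L x) / real L) = 6 * pi"
  using integral_unique[OF has_integral_divide[OF has_integral_add[OF
        has_integral_cos_mult_fejer_sum[of 0 "2 * L"] has_integral_cos_mult_fejer_sum[of 0 L]],
      of "real L"]] assms
  by (simp add: field_simps)

definition tail_sum :: "(nat \<Rightarrow> real) \<Rightarrow> nat \<Rightarrow> real" where
  "tail_sum c n = (\<Sum>m. if n < m then c m else 0)"

lemma summable_tail:
  fixes c :: "nat \<Rightarrow> real"
  assumes "summable (\<lambda>m. \<bar>c m\<bar>)"
  shows "summable (\<lambda>m. if n < m then c m else 0)"
  by (rule summable_comparison_test[OF _ assms]) auto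

lemma tail_sum_split:
  fixes c :: "nat \<Rightarrow> real"
  assumes "summable (\<lambda>m. \<bar>c m\<bar>)"
  shows "tail_sum c n = (\<Sum>m=n+1..2*n. c m) + c (2*n+1) + tail_sum c (2*n+1)"
proof -
  have "(\<lambda>m. (if m \<in> {n+1..2*n+1} then c m else 0) + (if 2*n+1 < m then c m else 0)) sums
     ((\<Sum>m\<in>{n+1..2*n+1}. c m) + tail_sum c (2*n+1))"
    unfolding tail_sum_def
    by (intro sums_add sums_If_finite_set summable_sums summable_tail assms) auto
  moreover have "(\<lambda>m. (if m \<in> {n+1..2*n+1} then c m else 0) + (if 2*n+1 < m then c m else 0)) =
      (\<lambda>m. if n < m then c m else 0)"
    by auto
  ultimately show ?thesis
    by (simp add: tail_sum_def sums_iff)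
qed

lemma abs_cos_series_remainder_le:
  fixes c :: "nat \<Rightarrow> real"
  assumes summable: "summable (\<lambda>m. \<bar>c m\<bar>)" and nonneg: "\<And>m. 1 \<le> m \<Longrightarrow> 0 \<le> c m"
    and sums: "(\<lambda>m. c m * cos (real m * x)) sums F"
  shows "\<bar>F - (\<Sum>k=0..n. c k * cos (real k * x))\<bar> \<le> tail_sum c n"
proof -
  define g where "g m = (if n < m then c m * cos (real m * x) else 0)" for m
  have "(\<lambda>m. c m * cos (real m * x) - (if m \<in> {0..n} then c m * cos (real m * x) else 0)) sums
     (F - (\<Sum>k\<in>{0..n}. c k * cos (real k * x)))"
    by (intro sums_diff sums sums_If_finite_set) auto
  moreover have "(\<lambda>m. c m * cos (real m * x) - (if m \<in> {0..n} then c m * cos (real m * x) else 0)) = g"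
    by (auto simp: g_def)
  ultimately have "F - (\<Sum>k=0..n. c k * cos (real k * x)) = suminf g"
    by (simp add: sums_iff)
  moreover have g_le: "\<bar>g m\<bar> \<le> (if n < m then c m else 0)" for m
  proof (cases "n < m")
    case True
    then show ?thesis
      using abs_mult_cos_le[of "c m" "real m * x"] nonneg[of m] by (simp add: g_def)
  qed (simp add: g_def)
  moreover have "summable (\<lambda>m. \<bar>g m\<bar>)"
    by (rule summable_comparison_test[OF _ summable_tail[OF summable, of n]]) (use g_le in auto)
  ultimately show ?thesis
    unfolding tail_sum_def
    by (metis (no_types, lifting) order_trans summable_rabs suminf_le summable_tail[OF summable])
qed

lemma summable_abs_if_nonneg:
  fixes c :: "nat \<Rightarrow> real"
  assumes "\<And>m. 1 \<le> m \<Longrightarrow> 0 \<le> c m" and "summable c"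
  shows "summable (\<lambda>m. \<bar>c m\<bar>)"
proof -
  have "eventually (\<lambda>m. \<bar>c m\<bar> = c m) sequentially"
    using eventually_ge_at_top[of 1] by eventually_elim (simp add: assms(1))
  then show ?thesis
    using assms(2) by (simp add: summable_cong)
qed

lemma abs_cos_series_le:
  fixes c :: "nat \<Rightarrow> real"
  assumes summable: "summable (\<lambda>m. \<bar>c m\<bar>)" and sums: "(\<lambda>m. c m * cos (real m * x)) sums F"
  shows "\<bar>F\<bar> \<le> (\<Sum>m. \<bar>c m\<bar>)"
proof -
  have summable': "summable (\<lambda>m. \<bar>c m * cos (real m * x)\<bar>)"
    by (rule summable_comparison_test[OF _ summable]) (auto intro: abs_mult_cos_le)
  have "\<bar>F\<bar> \<le> (\<Sum>m. \<bar>c m * cos (real m * x)\<bar>)"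
    using summable_rabs[OF summable'] sums by (simp add: sums_iff)
  also have "\<dots> \<le> (\<Sum>m. \<bar>c m\<bar>)"
    by (intro suminf_le summable summable' abs_mult_cos_le)
  finally show ?thesis .
qed

lemma abs_le_sup_norm:
  assumes "\<And>x. \<bar>g x\<bar> \<le> B"
  shows "\<bar>g x\<bar> \<le> sup_norm g"
  unfolding sup_norm_def
  by (rule cSUP_upper) (use assms in \<open>auto intro!: bdd_aboveI2[where M = B]\<close>)

lemma sup_norm_le:
  assumes "\<And>x. \<bar>g x\<bar> \<le> B"
  shows "sup_norm g \<le> B"
  unfolding sup_norm_def by (rule cSUP_least) (use assms in auto)

lemma sup_norm_nonneg:
  assumes "\<And>x. \<bar>g x\<bar> \<le> B"
  shows "0 \<le> sup_norm g"
  using abs_le_sup_norm[of g B 0] assms by fastforce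

lemma sup_norm_cos_series_remainder:
  fixes c :: "nat \<Rightarrow> real"
  assumes "summable (\<lambda>m. \<bar>c m\<bar>)" and "\<And>m. 1 \<le> m \<Longrightarrow> 0 \<le> c m"
    and "\<And>x. (\<lambda>m. c m * cos (real m * x)) sums f x"
  shows "0 \<le> sup_norm (\<lambda>x. f x - (\<Sum>k=0..n. c k * cos (real k * x)))"
    and "sup_norm (\<lambda>x. f x - (\<Sum>k=0..n. c k * cos (real k * x))) \<le> tail_sum c n"
proof -
  let ?remainder = "\<lambda>x. f x - (\<Sum>k=0..n. c k * cos (real k * x))"
  have "\<bar>?remainder x\<bar> \<le> tail_sum c n" for x
    by (rule abs_cos_series_remainder_le[OF assms(1,2,3)])
  then show "0 \<le> sup_norm ?remainder" and "sup_norm ?remainder \<le> tail_sum c n"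
    by (rule sup_norm_nonneg[where g = ?remainder], rule sup_norm_le[where g = ?remainder])
qed

lemma le_best_approx:
  assumes "0 < B" and "\<And>T. trig_poly n T \<Longrightarrow> R \<le> B * sup_norm (\<lambda>x. f x - T x)"
  shows "R \<le> B * best_approx n f"
proof -
  have "trig_poly n (\<lambda>x. 0)"
    unfolding trig_poly_def by (rule exI[of _ "\<lambda>_. 0"])+ simp
  then have "R / B \<le> best_approx n f"
    unfolding best_approx_def
    by (intro cINF_greatest) (use assms in \<open>auto simp: pos_divide_le_eq mult.commute\<close>)
  then show ?thesis
    using assms(1) by (simp add: pos_divide_le_eq mult.commute)
qed

subsection \<open>Coefficient bounds from a good trigonometric approximation\<close>

locale cos_series_near_trig_poly =
  fixes c :: "nat \<Rightarrow> real" and f T :: "real \<Rightarrow> real" and n :: nat and s :: real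
  assumes coeff_nonneg: "\<And>m. 1 \<le> m \<Longrightarrow> 0 \<le> c m"
    and abs_summable: "summable (\<lambda>m. \<bar>c m\<bar>)"
    and cos_series: "\<And>x. (\<lambda>m. c m * cos (real m * x)) sums f x"
    and continuous_f: "continuous_on UNIV f"
    and trig_poly_T: "trig_poly n T"
    and approx: "\<And>x. \<bar>f x - T x\<bar> \<le> s"
begin

lemma approx_nonneg: "0 \<le> s"
  using approx[of 0] by linarith

lemma abs_integral_kernel_diff_le:
  fixes K P :: "real \<Rightarrow> real"
  assumes K: "continuous_on {-pi..pi} K" and P: "continuous_on {-pi..pi} P"
    and K_le: "\<And>x. \<bar>K x\<bar> \<le> P x" and TK: "((\<lambda>x. T x * K x) has_integral I) {-pi..pi}"
  shows "\<bar>integral {-pi..pi} (\<lambda>x. f x * K x) - I\<bar> \<le> s * integral {-pi..pi} P"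
proof -
  have f: "continuous_on {-pi..pi} f"
    using continuous_f continuous_on_subset by blast
  have "integral {-pi..pi} (\<lambda>x. f x * K x) - I = integral {-pi..pi} (\<lambda>x. f x * K x - T x * K x)"
    using TK by (simp add: integral_diff integral_unique has_integral_integrable
        integrable_continuous_interval continuous_intros f K)
  also have "\<dots> = integral {-pi..pi} (\<lambda>x. (f x - T x) * K x)"
    by (simp add: left_diff_distrib)
  finally show ?thesis
    using abs_integral_mult_le[OF _ K P approx K_le] continuous_on_trig_poly[OF trig_poly_T] f
    by (simp add: continuous_intros)
qed

text \<open>Testing against \<open>cos (N x) \<cdot> fejer_sum L x\<close>, which is orthogonal to \<open>T\<close> and whose
  cosine moments are nonnegative and at least \<open>pi (l + 1)\<close> on the window.\<close>

lemma window_sum_le: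
  assumes "n + l + 1 \<le> p"
  shows "(\<Sum>m=p..p+2*l. c m) \<le> 4 * s"
proof -
  define N L where "N = p + l" and "L = 2 * l + 1"
  define K where "K x = cos (real N * x) * fejer_sum L x" for x
  define w where "w m = pi * real (L - nat \<bar>int m - int N\<bar>)" for m
  have moment: "integral {-pi..pi} (\<lambda>x. cos (real m * x) * K x) = w m" for m
    using integral_unique[OF has_integral_cos_mult_modulated_fejer_sum[of m N L]] assms
    by (simp add: K_def w_def N_def L_def)
  have w_low: "w k = 0" if "k \<le> n" for k
    using that assms by (simp add: w_def N_def L_def)
  have K: "continuous_on {-pi..pi} K"
    unfolding K_def by (intro continuous_intros continuous_on_fejer_sum)
  have K_le: "\<bar>K x\<bar> \<le> fejer_sum L x" for x
    using fejer_sum_nonneg[of L x]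
    by (simp add: K_def abs_mult mult_left_le_one_le)
  have TK: "((\<lambda>x. T x * K x) has_integral 0 * T 0) {-pi..pi}"
  proof (rule trig_poly_mult_even_has_integral[OF trig_poly_T K])
    show "K (-x) = K x" for x
      by (simp add: K_def)
    show "integral {-pi..pi} (\<lambda>x. cos (real k * x) * K x) = 0" if "k \<le> n" for k
      using that by (simp add: moment w_low)
  qed
  have "\<bar>integral {-pi..pi} (\<lambda>x. f x * K x)\<bar> \<le> s * (2 * pi * real L)"
    using abs_integral_kernel_diff_le[OF K continuous_on_fejer_sum K_le TK]
    by (simp add: integral_fejer_sum)
  moreover have series: "(\<lambda>m. c m * w m) sums integral {-pi..pi} (\<lambda>x. f x * K x)"
    using cos_series_integral_sums[OF abs_summable cos_series K] by (simp add: moment)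
  moreover have "0 \<le> c m * w m" for m
    using coeff_nonneg[of m] w_low[of 0] by (cases "m = 0") (simp_all add: w_def)
  then have "(\<Sum>m=p..p+2*l. c m * w m) \<le> (\<Sum>m. c m * w m)"
    using series by (intro sum_le_suminf) (auto simp: sums_iff)
  ultimately have "(\<Sum>m=p..p+2*l. c m * w m) \<le> s * (2 * pi * real L)"
    by (simp add: sums_iff)
  moreover have "(\<Sum>m=p..p+2*l. c m * (pi * real (l + 1))) \<le> (\<Sum>m=p..p+2*l. c m * w m)"
    using assms coeff_nonneg by (intro sum_mono mult_left_mono) (auto simp: w_def N_def L_def)
  ultimately have "(\<Sum>m=p..p+2*l. c m) * (pi * real (l + 1)) \<le> s * (2 * pi * real L)"
    by (simp add: sum_distrib_right)
  also have "\<dots> = (4 * s) * (pi * real (l + 1)) - 2 * pi * s"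
    by (simp add: L_def algebra_simps)
  also have "\<dots> \<le> (4 * s) * (pi * real (l + 1))"
    using approx_nonneg by simp
  finally show ?thesis
    by (simp add: mult_le_cancel_right pi_gt_zero)
qed

text \<open>Testing against the de la Vallee Poussin kernel, which reproduces \<open>T\<close> at \<open>0\<close> and
  whose cosine moments vanish beyond \<open>2 n + 1\<close>.\<close>

lemma tail_sum_beyond_double_le: "tail_sum c (2 * n + 1) \<le> 4 * s"
proof -
  define L where "L = n + 1"
  define w where "w m = integral {-pi..pi} (\<lambda>x. cos (real m * x) * vallee_poussin L x)" for m
  have V: "continuous_on {-pi..pi} (vallee_poussin L)"
    by (rule continuous_on_vallee_poussin)
  have P: "continuous_on {-pi..pi} (\<lambda>x. (fejer_sum (2 * L) x + fejer_sum L x) / real L)"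
    by (intro continuous_intros continuous_on_fejer_sum) (simp add: L_def)
  have majorant: "integral {-pi..pi} (\<lambda>x. (fejer_sum (2 * L) x + fejer_sum L x) / real L) = 6 * pi"
    by (rule integral_vallee_poussin_majorant) (simp add: L_def)
  have TV: "((\<lambda>x. T x * vallee_poussin L x) has_integral 2 * pi * T 0) {-pi..pi}"
    by (rule trig_poly_mult_even_has_integral[OF trig_poly_T V])
      (simp_all add: integral_cos_mult_vallee_poussin_low L_def)
  have "2 * pi * f 0 - integral {-pi..pi} (\<lambda>x. f x * vallee_poussin L x)
      = 2 * pi * (f 0 - T 0) + - (integral {-pi..pi} (\<lambda>x. f x * vallee_poussin L x) - 2 * pi * T 0)"
    by (simp add: algebra_simps)
  also have "\<dots> \<le> 2 * pi * s + s * (6 * pi)"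
  proof (rule add_mono)
    show "2 * pi * (f 0 - T 0) \<le> 2 * pi * s"
      using approx[of 0] by (intro mult_left_mono) auto
    show "- (integral {-pi..pi} (\<lambda>x. f x * vallee_poussin L x) - 2 * pi * T 0) \<le> s * (6 * pi)"
      using abs_le_D2[OF abs_integral_kernel_diff_le[OF V P abs_vallee_poussin_le TV]]
      by (simp only: majorant)
  qed
  finally have bound: "2 * pi * f 0 - integral {-pi..pi} (\<lambda>x. f x * vallee_poussin L x) \<le> 8 * pi * s"
    by simp
  have series: "(\<lambda>m. c m * (2 * pi - w m))
          sums (2 * pi * f 0 - integral {-pi..pi} (\<lambda>x. f x * vallee_poussin L x))"
    using sums_diff[OF sums_mult[OF cos_series[of 0], of "2 * pi"]
        cos_series_integral_sums[OF abs_summable cos_series V]]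
    by (simp add: w_def algebra_simps)
  have weights: "2 * pi * (if 2 * n + 1 < m then c m else 0) \<le> c m * (2 * pi - w m)" for m
    using coeff_nonneg[of m] integral_cos_mult_vallee_poussin_le[of L m]
      integral_cos_mult_vallee_poussin_low[of 0 L] integral_cos_mult_vallee_poussin_high[of L m]
    by (cases "m = 0") (auto simp: w_def L_def)
  have tail: "summable (\<lambda>m. if 2 * n + 1 < m then c m else 0)"
    by (rule summable_tail[OF abs_summable])
  have "2 * pi * tail_sum c (2 * n + 1) = (\<Sum>m. 2 * pi * (if 2 * n + 1 < m then c m else 0))"
    unfolding tail_sum_def by (rule suminf_mult[OF tail, symmetric])
  also have "\<dots> \<le> (\<Sum>m. c m * (2 * pi - w m))"
    using series by (intro suminf_le weights summable_mult tail) (simp add: sums_iff)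
  also have "\<dots> \<le> 2 * pi * (4 * s)"
    using series bound by (simp add: sums_iff)
  finally show ?thesis
    by (simp add: mult_le_cancel_left pi_gt_zero)
qed

text \<open>Averaging \<open>c (n + k) \<le> K (c m + c (2 m))\<close> over the last third \<open>m \<in> {p..n + k}\<close> of the
  block and bounding both resulting sums by windows.\<close>

lemma weighted_coeff_le:
  assumes quasi_mono: "\<And>m M. 1 \<le> m \<Longrightarrow> m \<le> M \<Longrightarrow> M \<le> 2 * m \<Longrightarrow> c M \<le> K * (c m + c (2 * m))"
    and "0 \<le> K" and k: "1 \<le> k" "k \<le> n"
  shows "real k * c (n + k) \<le> 24 * K * s"
proof -
  define q where "q = (k + 1) div 3"
  define p where "p = n + q + 1"
  define M where "M = n + k"
  have q: "3 * q \<le> k + 1" "k \<le> 3 * q + 1"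
    unfolding q_def by presburger+
  have first: "(\<Sum>m=p..M. c m) \<le> 4 * s"
  proof -
    have "(\<Sum>m=p..M. c m) \<le> (\<Sum>m=p..p+2*q. c m)"
      by (rule sum_mono2) (use q coeff_nonneg in \<open>auto simp: p_def M_def\<close>)
    also have "\<dots> \<le> 4 * s"
      by (rule window_sum_le) (simp add: p_def)
    finally show ?thesis .
  qed
  have second: "(\<Sum>m=p..M. c (2 * m)) \<le> 4 * s"
  proof -
    have "(\<Sum>m=p..M. c (2 * m)) = (\<Sum>j\<in>(\<lambda>m. 2 * m) ` {p..M}. c j)"
      by (subst sum.reindex) (auto simp: inj_on_def)
    also have "\<dots> \<le> (\<Sum>j=2*p..2*p+2*(M-p). c j)"
      by (rule sum_mono2) (use coeff_nonneg in \<open>auto simp: p_def\<close>)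
    also have "\<dots> \<le> 4 * s"
      by (rule window_sum_le) (use k q in \<open>simp add: p_def M_def\<close>)
    finally show ?thesis .
  qed
  have "real (M + 1 - p) * c M = (\<Sum>m=p..M. c M)"
    by simp
  also have "\<dots> \<le> (\<Sum>m=p..M. K * (c m + c (2 * m)))"
    using k q by (intro sum_mono quasi_mono) (auto simp: p_def M_def)
  also have "\<dots> = K * ((\<Sum>m=p..M. c m) + (\<Sum>m=p..M. c (2 * m)))"
    by (simp add: sum_distrib_left sum.distrib distrib_left)
  also have "\<dots> \<le> K * (8 * s)"
    using first second \<open>0 \<le> K\<close> by (intro mult_left_mono) auto
  finally have block: "real (M + 1 - p) * c M \<le> K * (8 * s)" .
  have "real k * c M \<le> 3 * real (M + 1 - p) * c M"
    using q k coeff_nonneg[of M] by (intro mult_right_mono) (auto simp: p_def M_def)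
  also have "\<dots> = 3 * (real (M + 1 - p) * c M)"
    by simp
  also have "\<dots> \<le> 24 * K * s"
    using block by linarith
  finally show ?thesis
    by (simp add: M_def)
qed

lemma abs_Max_weighted_coeffs_le:
  assumes quasi_mono: "\<And>m M. 1 \<le> m \<Longrightarrow> m \<le> M \<Longrightarrow> M \<le> 2 * m \<Longrightarrow> c M \<le> K * (c m + c (2 * m))"
    and "0 \<le> K" and "1 \<le> n"
  shows "\<bar>Max {real k * c (n + k) | k. 1 \<le> k \<and> k \<le> n}\<bar> \<le> 24 * K * s"
proof -
  have image: "{real k * c (n + k) | k. 1 \<le> k \<and> k \<le> n} = (\<lambda>k. real k * c (n + k)) ` {1..n}"
    by auto
  have "real 1 * c (n + 1) \<le> Max ((\<lambda>k. real k * c (n + k)) ` {1..n})"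
    using \<open>1 \<le> n\<close> by (intro Max_ge finite_imageI image_eqI[where x = 1]) auto
  moreover have "Max ((\<lambda>k. real k * c (n + k)) ` {1..n}) \<le> 24 * K * s"
    using \<open>1 \<le> n\<close> weighted_coeff_le[OF quasi_mono \<open>0 \<le> K\<close>] by (subst Max_le_iff) auto
  ultimately show ?thesis
    using coeff_nonneg[of "n + 1"] unfolding image by simp
qed

lemma tail_sum_le:
  assumes quasi_mono: "\<And>m M. 1 \<le> m \<Longrightarrow> m \<le> M \<Longrightarrow> M \<le> 2 * m \<Longrightarrow> c M \<le> K * (c m + c (2 * m))"
    and "0 \<le> K" and "1 \<le> n" and "0 \<le> C"
    and block: "\<bar>\<Sum>k=n+1..2*n. c k\<bar> \<le> C * \<bar>Max {real k * c (n + k) | k. 1 \<le> k \<and> k \<le> n}\<bar>"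
  shows "tail_sum c n \<le> (24 * C * K + 8) * s"
proof -
  have "(\<Sum>k=n+1..2*n. c k) \<le> C * (24 * K * s)"
    using block abs_Max_weighted_coeffs_le[OF quasi_mono \<open>0 \<le> K\<close> \<open>1 \<le> n\<close>] \<open>0 \<le> C\<close>
    by (smt (verit) mult_left_mono)
  moreover have "c (2 * n + 1) \<le> 4 * s"
    using window_sum_le[of 0 "2 * n + 1"] by simp
  ultimately show ?thesis
    using tail_sum_split[OF abs_summable, of n] tail_sum_beyond_double_le
    by (simp add: algebra_simps)
qed

end

subsection \<open>Real NBVS sequences\<close>

lemma NBVS_of_real_nonneg:
  assumes "NBVS (\<lambda>n. complex_of_real (c n))" and "1 \<le> m"
  shows "0 \<le> c m"
proof (rule ccontr)
  assume "\<not> 0 \<le> c m"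
  obtain \<theta>0 where "\<theta>0 < pi / 2" and "complex_of_real (c m) \<in> sector \<theta>0"
    using assms unfolding NBVS_def by blast
  with \<open>\<not> 0 \<le> c m\<close> show False
    using pi_gt_zero by (auto simp: sector_def)
qed

lemma NBVS_of_real_quasi_monotone:
  assumes "NBVS (\<lambda>n. complex_of_real (c n))"
  obtains K where "0 \<le> K"
    and "\<And>m M. 1 \<le> m \<Longrightarrow> m \<le> M \<Longrightarrow> M \<le> 2 * m \<Longrightarrow> c M \<le> K * (c m + c (2 * m))"
proof -
  obtain K where "K > 0" and variation: "\<And>m. 1 \<le> m \<Longrightarrow>
      (\<Sum>i=m..2*m. \<bar>c i - c (Suc i)\<bar>) \<le> K * (\<bar>c m\<bar> + \<bar>c (2 * m)\<bar>)"
    using assms unfolding NBVS_def by (auto simp flip: of_real_diff)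
  have "c M \<le> (K + 1) * (c m + c (2 * m))" if m: "1 \<le> m" "m \<le> M" "M \<le> 2 * m" for m M
  proof -
    have nonneg: "0 \<le> c m" "0 \<le> c (2 * m)"
      using NBVS_of_real_nonneg[OF assms] m by simp_all
    have "c M - c m = (\<Sum>i=m..<M. c (Suc i) - c i)"
      using m by (simp add: sum_Suc_diff')
    also have "\<dots> \<le> (\<Sum>i=m..<M. \<bar>c i - c (Suc i)\<bar>)"
      by (rule sum_mono) auto
    also have "\<dots> \<le> (\<Sum>i=m..2*m. \<bar>c i - c (Suc i)\<bar>)"
      by (rule sum_mono2) (use m in auto)
    also have "\<dots> \<le> K * (c m + c (2 * m))"
      using variation[OF m(1)] nonneg by simp
    finally show ?thesis
      using nonneg by (simp add: algebra_simps)
  qed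
  then show thesis
    using that[of "K + 1"] \<open>K > 0\<close> by simp
qed

lemma tail_sum_le_best_approx:
  fixes c :: "nat \<Rightarrow> real" and f :: "real \<Rightarrow> real"
  assumes coeff_nonneg: "\<And>m. 1 \<le> m \<Longrightarrow> 0 \<le> c m" and abs_summable: "summable (\<lambda>m. \<bar>c m\<bar>)"
    and cos_series: "\<And>x. (\<lambda>m. c m * cos (real m * x)) sums f x"
    and continuous_f: "continuous_on UNIV f"
    and quasi_mono: "\<And>m M. 1 \<le> m \<Longrightarrow> m \<le> M \<Longrightarrow> M \<le> 2 * m \<Longrightarrow> c M \<le> K * (c m + c (2 * m))"
    and "0 \<le> K" and "1 \<le> n" and "0 \<le> C"
    and block: "\<bar>\<Sum>k=n+1..2*n. c k\<bar> \<le> C * \<bar>Max {real k * c (n + k) | k. 1 \<le> k \<and> k \<le> n}\<bar>"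
  shows "tail_sum c n \<le> (24 * C * K + 8) * best_approx n f"
proof (rule le_best_approx)
  show "0 < 24 * C * K + 8"
    using \<open>0 \<le> C\<close> \<open>0 \<le> K\<close> by (simp add: add_nonneg_pos)
  fix T assume T: "trig_poly n T"
  obtain B where B: "\<And>x. \<bar>T x\<bar> \<le> B"
    using trig_poly_bounded[OF T] by blast
  have "\<bar>f x - T x\<bar> \<le> (\<Sum>m. \<bar>c m\<bar>) + B" for x
    using abs_cos_series_le[OF abs_summable cos_series, of x] B[of x]
      abs_triangle_ineq4[of "f x" "T x"] by linarith
  then have approx: "\<And>x. \<bar>f x - T x\<bar> \<le> sup_norm (\<lambda>x. f x - T x)"
    by (rule abs_le_sup_norm)
  interpret cos_series_near_trig_poly c f T n "sup_norm (\<lambda>x. f x - T x)"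
    by (intro cos_series_near_trig_poly.intro coeff_nonneg abs_summable cos_series continuous_f T approx)
  show "tail_sum c n \<le> (24 * C * K + 8) * sup_norm (\<lambda>x. f x - T x)"
    by (rule tail_sum_le[OF quasi_mono \<open>0 \<le> K\<close> \<open>1 \<le> n\<close> \<open>0 \<le> C\<close> block])
qed

theorem corollary1:
  fixes c :: "nat \<Rightarrow> real" and f :: "real \<Rightarrow> real"
  assumes "NBVS (\<lambda>n. complex_of_real (c n))"
    and "\<forall>x. (\<lambda>n. c n * cos (real n * x)) sums f x"
    and "continuous_on UNIV f"
    and "(\<lambda>n. \<Sum>k=n+1..2*n. c k) \<in> O(\<lambda>n. Max {real k * c (n + k) | k. 1 \<le> k \<and> k \<le> n})"
  shows "(\<lambda>n. sup_norm (\<lambda>x. f x - (\<Sum>k=0..n. c k * cos (real k * x))))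
           \<in> O(\<lambda>n. best_approx n f)"
proof -
  have coeff_nonneg: "\<And>m. 1 \<le> m \<Longrightarrow> 0 \<le> c m"
    by (rule NBVS_of_real_nonneg[OF assms(1)])
  obtain K where "0 \<le> K" and quasi_mono:
    "\<And>m M. 1 \<le> m \<Longrightarrow> m \<le> M \<Longrightarrow> M \<le> 2 * m \<Longrightarrow> c M \<le> K * (c m + c (2 * m))"
    using NBVS_of_real_quasi_monotone[OF assms(1)] by blast
  have abs_summable: "summable (\<lambda>m. \<bar>c m\<bar>)"
    using summable_abs_if_nonneg[OF coeff_nonneg] assms(2)[rule_format, of 0] by (simp add: sums_iff)
  obtain C where "C > 0" and block: "eventually (\<lambda>n. norm (\<Sum>k=n+1..2*n. c k)
      \<le> C * norm (Max {real k * c (n + k) | k. 1 \<le> k \<and> k \<le> n})) at_top"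
    using assms(4) by (elim landau_o.bigE)
  note remainder = sup_norm_cos_series_remainder[OF abs_summable coeff_nonneg assms(2)[rule_format]]
  have "eventually (\<lambda>n. norm (sup_norm (\<lambda>x. f x - (\<Sum>k=0..n. c k * cos (real k * x))))
      \<le> (24 * C * K + 8) * norm (best_approx n f)) at_top"
    using block eventually_ge_at_top[of 1]
  proof eventually_elim
    case (elim n)
    have "sup_norm (\<lambda>x. f x - (\<Sum>k=0..n. c k * cos (real k * x))) \<le> tail_sum c n"
      by (rule remainder(2))
    also have "\<dots> \<le> (24 * C * K + 8) * best_approx n f"
      using tail_sum_le_best_approx[OF coeff_nonneg abs_summable _ assms(3) quasi_mono \<open>0 \<le> K\<close>]
        assms(2) \<open>C > 0\<close> elim by simp
    also have "\<dots> \<le> (24 * C * K + 8) * \<bar>best_approx n f\<bar>"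
      using \<open>C > 0\<close> \<open>0 \<le> K\<close> by (intro mult_left_mono) auto
    finally show ?case
      using remainder(1) by simp
  qed
  then show ?thesis
    by (rule bigoI)
qed

end
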